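(* Let $w$ satisfy (A1) and let $\phi\in C^4([0,1])$ with $\phi(0)=\phi(1)=0$. Define the truncation error $T_\delta\phi(x)=\widetilde{\mathcal N}_\delta\phi(x)-(-\phi''(x))$. Then there exist constants $M,M'>0$ independent of $\delta$ (depending on $\phi$ and $w$) such that for all $\delta\in(0,1/2)$ and all $x\in\Omega$, $|T_\delta\phi(x)|\le M\delta^3 b_\delta(x)+M'\delta^2.$ In particular $\sup_{x\in(\delta,1-\delta)}|T_\delta\phi(x)|=O(\delta^2)$ and $\sup_{x\in\Omega}|T_\delta\phi(x)|=O(1)$ as $\delta\to0$.
   Context: Throughout, $\Omega=(0,1)$, $\delta\in(0,1/2)$, and $\chi_A$ denotes the indicator function of a set $A$. A function $w:[0,\infty)\to[0,\infty)$ satisfies (A1) if $w$ is continuous and nonincreasing on $[0,1)$, positive on $(0,1)$, $w(r)=0$ for $r\ge 1$, and $\int_{\mathbb R} w(|z|)|z|^2\,dz=2$. Set $w_\delta(x,y)=\delta^{-3}w(|x-y|/\delta)$, $a_\delta(x)=\int_0^1 w_\delta(x,y)\,dy$, and $b_\delta(x)=\frac{2}{(x+\delta)^2}\int_{x-\delta}^{0}(x-y)w_\delta(x,y)\,dy$ for $x\in(0,\delta)$, $b_\delta(x)=\frac{2}{(1-x+\delta)^2}\int_{1}^{x+\delta}(y-x)w_\delta(x,y)\,dy$ for $x\in(1-\delta,1)$, and $b_\delta(x)=0$ otherwise. The operator $\widetilde{\mathcal N}_\delta$ is $\widetilde{\mathcal N}_\delta u(x)=a_\delta(x)u(x)-\int_0^1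 u(y)\big(w_\delta(x,y)-b_\delta(x)\chi_{[0,\delta]}(|y-x|)\big)\,dy$. *)

theory Defs
  imports "HOL-Analysis.Analysis"
begin

definition A1 :: "(real \<Rightarrow> real) \<Rightarrow> bool" where
  "A1 w \<longleftrightarrow>
     (\<forall>r\<ge>0. w r \<ge> 0) \<and>
     continuous_on {0..<1} w \<and>
     (\<forall>r s. 0 \<le> r \<and> r \<le> s \<and> s < 1 \<longrightarrow> w s \<le> w r) \<and>
     (\<forall>r. 0 < r \<and> r < 1 \<longrightarrow> w r > 0) \<and>
     (\<forall>r\<ge>1. w r = 0) \<and>
     ((\<lambda>z. w \<bar>z\<bar> * \<bar>z\<bar>^2) has_integral 2) UNIV"

definition w_delta :: "(real \<Rightarrow> real) \<Rightarrow> real \<Rightarrow> real \<Rightarrow> real \<Rightarrow> real" where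
  "w_delta w \<delta> x y = w (\<bar>x - y\<bar> / \<delta>) / \<delta>^3"

definition a_delta :: "(real \<Rightarrow> real) \<Rightarrow> real \<Rightarrow> real \<Rightarrow> real" where
  "a_delta w \<delta> x = integral {0..1} (\<lambda>y. w_delta w \<delta> x y)"

definition b_delta :: "(real \<Rightarrow> real) \<Rightarrow> real \<Rightarrow> real \<Rightarrow> real" where
  "b_delta w \<delta> x =
     (if 0 < x \<and> x < \<delta> then
        2 / (x + \<delta>)^2 * integral {x - \<delta>..0} (\<lambda>y. (x - y) * w_delta w \<delta> x y)
      else if 1 - \<delta> < x \<and> x < 1 then
        2 / (1 - x + \<delta>)^2 * integral {1..x + \<delta>} (\<lambda>y. (y - x) * w_delta w \<delta> x y)
      else 0)"

definition N_tilde :: "(real \<Rightarrow> real) \<Rightarrow> real \<Rightarrow> (real \<Rightarrow> real) \<Rightarrow> real \<Rightarrow> real" where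
  "N_tilde w \<delta> u x =
     a_delta w \<delta> x * u x
     - integral {0..1} (\<lambda>y. u y * (w_delta w \<delta> x y
                                    - b_delta w \<delta> x * indicator {0..\<delta>} \<bar>y - x\<bar>))"

end

(*
  Expand phi(y) to third order around x.  Away from the boundary b_delta vanishes, the scaled
  kernel w_delta(x, .) is symmetric about x with second moment 2, so the expansion of
  N_tilde phi(x) returns -phi''(x) up to the fourth-order remainder, which is O(delta^2).

  For 0 < x < delta the kernel is cut off at 0.  The missing tail moments of w_delta over
  [x - delta, 0] are all controlled by the first one, which equals (x + delta)^2 b_delta(x) / 2;
  since phi(0) = 0, phi is nearly linear on [0, x + delta], and the correction term
  b_delta(x) times the integral of phi cancels the missing first-order contribution up to
  O(delta^3 b_delta(x)).  The right boundary is the mirror image under x |-> 1 - x.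
*)

theory Submission imports Defs begin

section \<open>The scaled kernel\<close>

lemma A1_nonneg: "A1 w \<Longrightarrow> 0 \<le> r \<Longrightarrow> 0 \<le> w r"
  unfolding A1_def by blast

lemma A1_vanishes: "A1 w \<Longrightarrow> 1 \<le> r \<Longrightarrow> w r = 0"
  unfolding A1_def by blast

lemma A1_antimono:
  assumes "A1 w" "0 \<le> r" "r \<le> s"
  shows "w s \<le> w r"
proof (cases "s < 1")
  case True
  then show ?thesis using assms unfolding A1_def by blast
next
  case False
  then show ?thesis using assms A1_nonneg A1_vanishes by force
qed

lemma w_delta_nonneg: "A1 w \<Longrightarrow> 0 < \<delta> \<Longrightarrow> 0 \<le> w_delta w \<delta> x y"
  unfolding w_delta_def by (simp add: A1_nonneg)

lemma w_delta_le: "A1 w \<Longrightarrow> 0 < \<delta> \<Longrightarrow> w_delta w \<delta> x y \<le> w 0 / \<delta>^3"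
  unfolding w_delta_def by (simp add: A1_antimono divide_right_mono)

lemma w_delta_eq_0: "A1 w \<Longrightarrow> 0 < \<delta> \<Longrightarrow> \<delta> \<le> \<bar>x - y\<bar> \<Longrightarrow> w_delta w \<delta> x y = 0"
  unfolding w_delta_def by (simp add: A1_vanishes)

lemma w_delta_reflect: "w_delta w \<delta> (c - x) (c - y) = w_delta w \<delta> x y"
  unfolding w_delta_def by (simp add: abs_minus_commute)

lemma w_delta_borel_measurable:
  assumes "A1 w" "0 < \<delta>"
  shows "w_delta w \<delta> x \<in> borel_measurable borel"
proof -
  \<comment> \<open>w may jump at 1, so measurability comes from monotonicity rather than continuity\<close>
  have "mono (\<lambda>r. - w (max 0 r))"
    by (rule monoI) (simp add: A1_antimono[OF assms(1)] max.coboundedI2)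
  then have "(\<lambda>r. w (max 0 r)) \<in> borel_measurable borel"
    using borel_measurable_uminus[OF borel_measurable_mono] by fastforce
  then have "(\<lambda>y. w (max 0 (\<bar>x - y\<bar> / \<delta>))) \<in> borel_measurable borel"
    by (rule measurable_compose[rotated]) measurable
  moreover have "max 0 (\<bar>x - y\<bar> / \<delta>) = \<bar>x - y\<bar> / \<delta>" for y
    using assms(2) by simp
  ultimately show ?thesis
    unfolding w_delta_def by (simp add: borel_measurable_divide)
qed

lemma integrable_on_mult_w_delta:
  assumes "A1 w" "0 < \<delta>" "continuous_on {c..d} g"
  shows "(\<lambda>y. g y * w_delta w \<delta> x y) integrable_on {c..d}"
proof -
  obtain K where K: "\<And>y. y \<in> {c..d} \<Longrightarrow> \<bar>g y\<bar> \<le> K"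
    using continuous_on_compact_bound[OF compact_Icc assms(3)] by auto
  have "g \<in> borel_measurable (lebesgue_on {c..d})"
    using assms(3) by (rule continuous_imp_measurable_on_sets_lebesgue) simp
  moreover have "w_delta w \<delta> x \<in> borel_measurable (lebesgue_on {c..d})"
    using w_delta_borel_measurable[OF assms(1,2)]
    by (metis borel_measurable_subalgebra lebesgue_on_UNIV_eq sets_completionI_sets sets_lborel
        space_borel space_lebesgue_on subsetI measurable_restrict_space1)
  ultimately have "(\<lambda>y. g y * w_delta w \<delta> x y) \<in> borel_measurable (lebesgue_on {c..d})"
    by measurable
  then show ?thesis
  proof (rule measurable_bounded_by_integrable_imp_integrable_real)
    show "(\<lambda>_. K * (w 0 / \<delta>^3)) integrable_on {c..d}"
      by (intro integrable_continuous_interval continuous_intros)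
    show "\<bar>g y * w_delta w \<delta> x y\<bar> \<le> K * (w 0 / \<delta>^3)" if "y \<in> {c..d}" for y
      unfolding abs_mult
      using w_delta_nonneg[OF assms(1,2)] w_delta_le[OF assms(1,2)] K[OF that]
      by (intro mult_mono) auto
  qed simp
qed

lemma integral_reflect_about:
  fixes f :: "real \<Rightarrow> 'a::real_normed_vector"
  shows "integral {a..b} (\<lambda>y. f (c - y)) = integral {c - b..c - a} f"
proof -
  have "integral {a..b} (\<lambda>y. f (c - y)) = integral {a - c..b - c} (\<lambda>z. f (c - (z + c)))"
    using integral_shift_real_ivl[of a c b "\<lambda>y. f (c - y)"] by simp
  also have "\<dots> = integral {- (c - a)..- (c - b)} (\<lambda>z. f (- z))"
    by simp
  also have "\<dots> = integral {c - b..c - a} f"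
    by (rule Henstock_Kurzweil_Integration.integral_reflect_real)
  finally show ?thesis .
qed

lemma integral_subinterval_eq:
  fixes f :: "real \<Rightarrow> 'a::banach"
  assumes "{p..q} \<subseteq> {c..d}" "\<And>y. y \<in> {c..d} \<Longrightarrow> y \<notin> {p..q} \<Longrightarrow> f y = 0"
  shows "integral {c..d} f = integral {p..q} f"
proof -
  have "integral {c..d} f = integral {c..d} (\<lambda>y. if y \<in> {p..q} then f y else 0)"
    using assms(2) by (intro integral_cong) auto
  also have "\<dots> = integral ({p..q} \<inter> {c..d}) f"
    by (rule integral_restrict_Int)
  also have "{p..q} \<inter> {c..d} = {p..q}"
    using assms(1) by blast
  finally show ?thesis .
qed

lemma w_delta_second_moment:
  assumes "A1 w" "0 < \<delta>"
  shows "((\<lambda>y. (y - x)^2 * w_delta w \<delta> x y) has_integral 2) {x - \<delta>..x + \<delta>}"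
proof -
  define h where "h z = w \<bar>z\<bar> * \<bar>z\<bar>^2" for z :: real
  have "(h has_integral 2) UNIV"
    using assms(1) unfolding A1_def h_def by blast
  moreover have "h = (\<lambda>z. if z \<in> {-1..1} then h z else 0)"
    using A1_vanishes[OF assms(1)] unfolding h_def by (auto simp: fun_eq_iff)
  ultimately have "(h has_integral 2) (cbox (-1) 1)"
    using has_integral_restrict_UNIV[of "{-1..1}" h 2] by simp
  then have "((\<lambda>y. h ((1/\<delta>) *\<^sub>R y + - x/\<delta>)) has_integral 2 /\<^sub>R (1/\<delta>) ^ DIM(real))
      (cbox ((-1 - - x/\<delta>) /\<^sub>R (1/\<delta>)) ((1 - - x/\<delta>) /\<^sub>R (1/\<delta>)))"
    by (rule has_integral_affinity') (use assms(2) in simp)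
  moreover have "(-1 - - x/\<delta>) /\<^sub>R (1/\<delta>) = x - \<delta>" "(1 - - x/\<delta>) /\<^sub>R (1/\<delta>) = x + \<delta>"
    "2 /\<^sub>R (1/\<delta>) ^ DIM(real) = 2 * \<delta>" "(1/\<delta>) *\<^sub>R y + - x/\<delta> = (y - x) / \<delta>" for y
    using assms(2) by (simp_all add: field_simps)
  ultimately have "((\<lambda>y. h ((y - x) / \<delta>)) has_integral 2 * \<delta>) {x - \<delta>..x + \<delta>}"
    by (simp add: mult.commute)
  then have "((\<lambda>y. h ((y - x) / \<delta>) / \<delta>) has_integral 2 * \<delta> / \<delta>) {x - \<delta>..x + \<delta>}"
    by (rule has_integral_divide)
  moreover have "h ((y - x) / \<delta>) / \<delta> = (y - x)^2 * w_delta w \<delta> x y" for y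
    using assms(2) unfolding h_def w_delta_def
    by (simp add: abs_divide abs_minus_commute power_divide power2_abs power2_commute
        power3_eq_cube power2_eq_square field_simps)
  ultimately show ?thesis
    using assms(2) by simp
qed

lemma w_delta_second_moment_le:
  assumes "A1 w" "0 < \<delta>"
  shows "integral {c..d} (\<lambda>y. (y - x)^2 * w_delta w \<delta> x y) \<le> 2"
proof -
  let ?f = "\<lambda>y. (y - x)^2 * w_delta w \<delta> x y"
  have "(?f has_integral 2) UNIV"
    by (rule has_integral_on_superset[OF w_delta_second_moment[OF assms]])
      (auto simp: w_delta_eq_0[OF assms] abs_if)
  then have "integral {c..d} ?f \<le> integral UNIV ?f"
    using w_delta_nonneg[OF assms]
    by (intro integral_subset_le integrable_on_mult_w_delta[OF assms] continuous_intros)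
      (auto intro: has_integral_integrable)
  also have "\<dots> = 2"
    using \<open>(?f has_integral 2) UNIV\<close> by (rule integral_unique)
  finally show ?thesis .
qed

lemma w_delta_odd_moment:
  assumes "odd k"
  shows "integral {x - \<delta>..x + \<delta>} (\<lambda>y. (y - x)^k * w_delta w \<delta> x y) = 0"
proof -
  let ?f = "\<lambda>y. (y - x)^k * w_delta w \<delta> x y"
  have "?f (2*x - y) = - ?f y" for y
  proof -
    have "(x - y)^k = - ((y - x)^k)"
      using power_minus_odd[OF assms, of "y - x"] by simp
    then show ?thesis
      using w_delta_reflect[of w \<delta> "2*x" x y] by (simp add: algebra_simps)
  qed
  then have "- integral {x - \<delta>..x + \<delta>} ?f = integral {x - \<delta>..x + \<delta>} (\<lambda>y. ?f (2*x - y))"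
    by (simp add: integral_neg)
  also have "\<dots> = integral {2*x - (x + \<delta>)..2*x - (x - \<delta>)} ?f"
    by (rule integral_reflect_about)
  also have "\<dots> = integral {x - \<delta>..x + \<delta>} ?f"
    by (simp add: algebra_simps)
  finally show ?thesis by simp
qed

section \<open>The operator and the boundary coefficient\<close>

lemma N_tilde_eq:
  assumes "A1 w" "0 < \<delta>" "continuous_on {0..1} \<phi>"
  shows "N_tilde w \<delta> \<phi> x = integral {0..1} (\<lambda>y. (\<phi> x - \<phi> y) * w_delta w \<delta> x y)
     + b_delta w \<delta> x * integral ({0..1} \<inter> {x - \<delta>..x + \<delta>}) \<phi>"
proof -
  let ?W = "w_delta w \<delta> x" and ?b = "b_delta w \<delta> x"
  let ?\<chi> = "\<lambda>y. indicator {0..\<delta>} \<bar>y - x\<bar> :: real"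
  have window: "\<phi> y * ?\<chi> y = (if y \<in> {x - \<delta>..x + \<delta>} then \<phi> y else 0)" for y
    by (auto simp: indicator_def abs_if)
  have "\<phi> integrable_on {x - \<delta>..x + \<delta>} \<inter> {0..1}"
    unfolding Int_atLeastAtMost
    by (rule integrable_continuous_interval, rule continuous_on_subset[OF assms(3)]) auto
  then have "(\<lambda>y. \<phi> y * ?\<chi> y) integrable_on {0..1}"
    unfolding window integrable_restrict_Int .
  then have i\<chi>: "(\<lambda>y. ?b * (\<phi> y * ?\<chi> y)) integrable_on {0..1}"
    by (rule integrable_on_mult_right)
  have i\<phi>: "(\<lambda>y. \<phi> y * ?W y) integrable_on {0..1}"
    by (rule integrable_on_mult_w_delta[OF assms])
  have i1: "(\<lambda>y. \<phi> x * ?W y) integrable_on {0..1}"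
    by (rule integrable_on_mult_w_delta[OF assms(1,2)]) (intro continuous_intros)
  have "N_tilde w \<delta> \<phi> x
      = integral {0..1} (\<lambda>y. \<phi> x * ?W y) - integral {0..1} (\<lambda>y. \<phi> y * ?W y - ?b * (\<phi> y * ?\<chi> y))"
    unfolding N_tilde_def a_delta_def by (simp add: algebra_simps)
  also have "\<dots> = integral {0..1} (\<lambda>y. \<phi> x * ?W y - \<phi> y * ?W y)
      + ?b * integral {0..1} (\<lambda>y. \<phi> y * ?\<chi> y)"
    by (simp add: integral_diff[OF i\<phi> i\<chi>] integral_diff[OF i1 i\<phi>])
  also have "integral {0..1} (\<lambda>y. \<phi> y * ?\<chi> y) = integral ({0..1} \<inter> {x - \<delta>..x + \<delta>}) \<phi>"
    unfolding window integral_restrict_Int by (simp add: Int_commute)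
  finally show ?thesis
    by (simp add: algebra_simps)
qed

lemma N_tilde_reflect:
  assumes "b_delta w \<delta> x = b_delta w \<delta> (1 - x)"
  shows "N_tilde w \<delta> \<phi> x = N_tilde w \<delta> (\<lambda>y. \<phi> (1 - y)) (1 - x)"
proof -
  have "a_delta w \<delta> x = integral {0..1} (\<lambda>y. w_delta w \<delta> (1 - x) (1 - y))"
    unfolding a_delta_def w_delta_reflect ..
  also have "\<dots> = a_delta w \<delta> (1 - x)"
    unfolding a_delta_def using integral_reflect_about[of 0 1 "w_delta w \<delta> (1 - x)" 1] by simp
  finally have a: "a_delta w \<delta> x = a_delta w \<delta> (1 - x)" .
  let ?g = "\<lambda>y. \<phi> (1 - y) * (w_delta w \<delta> (1 - x) y - b_delta w \<delta> (1 - x) * indicator {0..\<delta>} \<bar>y - (1 - x)\<bar>)"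
  have "integral {0..1} (\<lambda>y. \<phi> y * (w_delta w \<delta> x y - b_delta w \<delta> x * indicator {0..\<delta>} \<bar>y - x\<bar>))
      = integral {0..1} (\<lambda>y. ?g (1 - y))"
    using assms w_delta_reflect[of w \<delta> 1 x] by (simp add: abs_minus_commute)
  also have "\<dots> = integral {0..1} ?g"
    using integral_reflect_about[of 0 1 ?g 1] by simp
  finally show ?thesis
    unfolding N_tilde_def a by simp
qed

definition tail_moment :: "(real \<Rightarrow> real) \<Rightarrow> real \<Rightarrow> real \<Rightarrow> nat \<Rightarrow> real" where
  "tail_moment w \<delta> x k = integral {x - \<delta>..0} (\<lambda>y. (x - y)^k * w_delta w \<delta> x y)"

lemma tail_moment_nonneg:
  assumes "A1 w" "0 < \<delta>" "0 \<le> x"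
  shows "0 \<le> tail_moment w \<delta> x k"
  unfolding tail_moment_def using assms w_delta_nonneg[OF assms(1,2)]
  by (intro integral_nonneg integrable_on_mult_w_delta continuous_intros) auto

lemma tail_moment_Suc_le:
  assumes "A1 w" "0 < \<delta>" "0 \<le> x"
  shows "tail_moment w \<delta> x (Suc k) \<le> \<delta>^k * tail_moment w \<delta> x 1"
proof -
  have "tail_moment w \<delta> x (Suc k) \<le> integral {x - \<delta>..0} (\<lambda>y. (\<delta>^k * (x - y)) * w_delta w \<delta> x y)"
    unfolding tail_moment_def
  proof (intro integral_le integrable_on_mult_w_delta[OF assms(1,2)] continuous_intros)
    fix y assume y: "y \<in> {x - \<delta>..0}"
    then have "(x - y)^k \<le> \<delta>^k" and "0 \<le> x - y"
      using assms(3) by (auto intro: power_mono)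
    then have "(x - y)^Suc k \<le> \<delta>^k * (x - y)"
      by (metis mult_left_mono mult.commute power_Suc)
    then show "(x - y)^Suc k * w_delta w \<delta> x y \<le> (\<delta>^k * (x - y)) * w_delta w \<delta> x y"
      using w_delta_nonneg[OF assms(1,2)] by (rule mult_right_mono)
  qed
  then show ?thesis
    unfolding tail_moment_def by (simp add: mult.assoc)
qed

lemma tail_moment_1_le:
  assumes "A1 w" "0 < \<delta>" "0 \<le> x"
  shows "tail_moment w \<delta> x 1 \<le> w 0 / \<delta>"
proof -
  have "tail_moment w \<delta> x 1 \<le> integral {x - \<delta>..0} (\<lambda>y. w 0 / \<delta>^2)"
    unfolding tail_moment_def
  proof (intro integral_le integrable_on_mult_w_delta[OF assms(1,2)] integrable_continuous_interval
      continuous_intros)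
    fix y assume "y \<in> {x - \<delta>..0}"
    then have "(x - y)^1 * w_delta w \<delta> x y \<le> \<delta> * (w 0 / \<delta>^3)"
      using assms(3) w_delta_le[OF assms(1,2)] w_delta_nonneg[OF assms(1,2)]
      by (intro mult_mono) auto
    then show "(x - y)^1 * w_delta w \<delta> x y \<le> w 0 / \<delta>^2"
      using assms(2) by (simp add: power3_eq_cube power2_eq_square)
  qed
  also have "\<dots> \<le> \<delta> * (w 0 / \<delta>^2)"
    using assms A1_nonneg[OF assms(1), of 0]
    by (cases "x \<le> \<delta>") (simp_all add: divide_right_mono mult_right_mono)
  also have "\<dots> = w 0 / \<delta>"
    using assms(2) by (simp add: power2_eq_square)
  finally show ?thesis .
qed

lemma b_delta_left:
  "0 < x \<Longrightarrow> x < \<delta> \<Longrightarrow> b_delta w \<delta> x = 2 / (x + \<delta>)^2 * tail_moment w \<delta> x 1"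
  unfolding b_delta_def tail_moment_def by simp

lemma tail_moment_1_eq:
  "0 < x \<Longrightarrow> x < \<delta> \<Longrightarrow> tail_moment w \<delta> x 1 = b_delta w \<delta> x * (x + \<delta>)^2 / 2"
  by (simp add: b_delta_left)

lemma b_delta_reflect:
  assumes "\<delta> < 1/2" "1 - \<delta> < x" "x < 1"
  shows "b_delta w \<delta> x = b_delta w \<delta> (1 - x)"
proof -
  let ?g = "\<lambda>z. ((1 - x) - z) * w_delta w \<delta> (1 - x) z"
  have "integral {1..x + \<delta>} (\<lambda>y. (y - x) * w_delta w \<delta> x y) = integral {1..x + \<delta>} (\<lambda>y. ?g (1 - y))"
    by (simp add: w_delta_reflect)
  also have "\<dots> = integral {1 - (x + \<delta>)..1 - 1} ?g"
    by (rule integral_reflect_about)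
  finally show ?thesis
    unfolding b_delta_def using assms by (simp add: algebra_simps)
qed

lemma b_delta_interior: "\<delta> \<le> x \<Longrightarrow> x \<le> 1 - \<delta> \<Longrightarrow> b_delta w \<delta> x = 0"
  unfolding b_delta_def by auto

lemma b_delta_nonneg_and_bounded:
  assumes "A1 w" "0 < \<delta>" "\<delta> < 1/2"
  shows "0 \<le> b_delta w \<delta> x \<and> \<delta>^3 * b_delta w \<delta> x \<le> 2 * w 0"
proof -
  have left: "0 \<le> b_delta w \<delta> x' \<and> \<delta>^3 * b_delta w \<delta> x' \<le> 2 * w 0" if "0 < x'" "x' < \<delta>" for x'
  proof -
    let ?B = "tail_moment w \<delta> x' 1"
    have B: "0 \<le> ?B" "?B \<le> w 0 / \<delta>"
      using that assms tail_moment_nonneg tail_moment_1_le by auto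
    have "\<delta>^3 * b_delta w \<delta> x' = 2 * \<delta>^3 / (x' + \<delta>)^2 * ?B"
      using b_delta_left[OF that] by simp
    also have "\<dots> \<le> 2 * \<delta>^3 / \<delta>^2 * (w 0 / \<delta>)"
      using that assms B by (intro mult_mono divide_left_mono power_mono) auto
    also have "\<dots> = 2 * w 0"
      using assms(2) by (simp add: power3_eq_cube power2_eq_square)
    finally show ?thesis
      using B b_delta_left[OF that] by simp
  qed
  consider "0 < x" "x < \<delta>" | "1 - \<delta> < x" "x < 1" | "b_delta w \<delta> x = 0"
    using assms(3) unfolding b_delta_def by fastforce
  then show ?thesis
  proof cases
    case 2
    then show ?thesis using b_delta_reflect[OF assms(3) 2] left[of "1 - x"] by simp
  qed (use left A1_nonneg[OF assms(1), of 0] in auto)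
qed

section \<open>Smooth test functions\<close>

lemma has_real_derivative_reflect:
  assumes "\<And>x. x \<in> {0..1} \<Longrightarrow> (f has_real_derivative f' x) (at x within {0..1})" "y \<in> {0..1}"
  shows "((\<lambda>y. f (1 - y)) has_real_derivative - f' (1 - y)) (at y within {0..1})"
proof -
  have "(\<lambda>y. 1 - y) ` {0..1::real} = {0..1}"
    by (auto simp: image_iff intro!: bexI[where x = "1 - _"])
  then have "(f has_real_derivative f' (1 - y)) (at (1 - y) within (\<lambda>y. 1 - y) ` {0..1})"
    using assms by auto
  then have "((f \<circ> (\<lambda>y. 1 - y)) has_real_derivative f' (1 - y) * (-1)) (at y within {0..1})"
    by (rule DERIV_image_chain) (auto intro!: derivative_eq_intros)
  then show ?thesis
    by (simp add: o_def)
qed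

locale C4_test_function =
  fixes \<phi> \<phi>1 \<phi>2 \<phi>3 \<phi>4 :: "real \<Rightarrow> real" and K2 K3 K4 :: real
  assumes deriv1: "\<And>x. x \<in> {0..1} \<Longrightarrow> (\<phi> has_real_derivative \<phi>1 x) (at x within {0..1})"
    and deriv2: "\<And>x. x \<in> {0..1} \<Longrightarrow> (\<phi>1 has_real_derivative \<phi>2 x) (at x within {0..1})"
    and deriv3: "\<And>x. x \<in> {0..1} \<Longrightarrow> (\<phi>2 has_real_derivative \<phi>3 x) (at x within {0..1})"
    and deriv4: "\<And>x. x \<in> {0..1} \<Longrightarrow> (\<phi>3 has_real_derivative \<phi>4 x) (at x within {0..1})"
    and bound2: "\<And>y. y \<in> {0..1} \<Longrightarrow> \<bar>\<phi>2 y\<bar> \<le> K2"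
    and bound3: "\<And>y. y \<in> {0..1} \<Longrightarrow> \<bar>\<phi>3 y\<bar> \<le> K3"
    and bound4: "\<And>y. y \<in> {0..1} \<Longrightarrow> \<bar>\<phi>4 y\<bar> \<le> K4"
    and vanishes_0: "\<phi> 0 = 0"
    and vanishes_1: "\<phi> 1 = 0"
begin

lemma continuous_on_phi: "continuous_on {0..1} \<phi>"
  using deriv1 DERIV_continuous continuous_on_eq_continuous_within by blast

lemma bounds_nonneg: "0 \<le> K2" "0 \<le> K3" "0 \<le> K4"
  using bound2[of 0] bound3[of 0] bound4[of 0] by auto

definition taylor_remainder :: "real \<Rightarrow> real \<Rightarrow> real" where
  "taylor_remainder x y =
     \<phi> y - (\<phi> x + \<phi>1 x * (y - x) + \<phi>2 x * (y - x)^2 / 2 + \<phi>3 x * (y - x)^3 / 6)"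

lemma continuous_on_taylor_remainder: "continuous_on {0..1} (taylor_remainder x)"
  unfolding taylor_remainder_def using continuous_on_phi
  by (intro continuous_intros) auto

lemma taylor_remainder_bound:
  assumes "x \<in> {0..1}" "y \<in> {0..1}"
  shows "\<bar>taylor_remainder x y\<bar> \<le> K4 * (y - x)^4 / 6"
proof -
  define f where "f i = (case i of 0 \<Rightarrow> \<phi> | Suc 0 \<Rightarrow> \<phi>1 | Suc (Suc 0) \<Rightarrow> \<phi>2
     | Suc (Suc (Suc 0)) \<Rightarrow> \<phi>3 | _ \<Rightarrow> \<phi>4)" for i :: nat
  have "norm (f 0 y - (\<Sum>i\<le>3. f i x * (y - x) ^ i / fact i)) \<le> K4 * norm (y - x) ^ Suc 3 / fact 3"
  proof (rule field_Taylor[of "{0..1}"])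
    show "(f i has_field_derivative f (Suc i) t) (at t within {0..1})" if "t \<in> {0..1}" "i \<le> 3" for i t
    proof -
      have "i = 0 \<or> i = 1 \<or> i = 2 \<or> i = 3"
        using that by auto
      then show ?thesis
        using deriv1 deriv2 deriv3 deriv4 that unfolding f_def by (auto simp: numeral_eq_Suc)
    qed
    show "norm (f (Suc 3) t) \<le> K4" if "t \<in> {0..1}" for t
      using bound4 that unfolding f_def by (simp add: numeral_eq_Suc)
  qed (use assms in auto)
  moreover have "(\<Sum>i\<le>3. f i x * (y - x) ^ i / fact i) =
      \<phi> x + \<phi>1 x * (y - x) + \<phi>2 x * (y - x)^2 / 2 + \<phi>3 x * (y - x)^3 / 6"
    unfolding f_def by (simp add: numeral_eq_Suc fact_numeral)
  ultimately show ?thesis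
    unfolding taylor_remainder_def f_def by (simp add: numeral_eq_Suc fact_numeral power_abs)
qed

lemma linear_taylor_bound:
  assumes "x \<in> {0..1}" "y \<in> {0..1}"
  shows "\<bar>\<phi> y - (\<phi> x + \<phi>1 x * (y - x))\<bar> \<le> K2 * (y - x)^2"
proof -
  define f where "f i = (case i of 0 \<Rightarrow> \<phi> | Suc 0 \<Rightarrow> \<phi>1 | _ \<Rightarrow> \<phi>2)" for i :: nat
  have "norm (f 0 y - (\<Sum>i\<le>1. f i x * (y - x) ^ i / fact i)) \<le> K2 * norm (y - x) ^ Suc 1 / fact 1"
  proof (rule field_Taylor[of "{0..1}"])
    show "(f i has_field_derivative f (Suc i) t) (at t within {0..1})" if "t \<in> {0..1}" "i \<le> 1" for i t
    proof -
      have "i = 0 \<or> i = 1"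
        using that by auto
      then show ?thesis
        using deriv1 deriv2 that unfolding f_def by auto
    qed
    show "norm (f (Suc 1) t) \<le> K2" if "t \<in> {0..1}" for t
      using bound2 that unfolding f_def by (simp add: numeral_eq_Suc)
  qed (use assms in auto)
  then show ?thesis
    unfolding f_def by (simp add: power_abs power2_eq_square)
qed

lemma integral_taylor_expansion:
  assumes "A1 w" "0 < \<delta>" "0 \<le> c" "c \<le> e" "e \<le> 1"
  shows "integral {c..e} (\<lambda>y. (\<phi> x - \<phi> y) * w_delta w \<delta> x y) =
     - (\<phi>1 x * integral {c..e} (\<lambda>y. (y - x)^1 * w_delta w \<delta> x y)
        + \<phi>2 x / 2 * integral {c..e} (\<lambda>y. (y - x)^2 * w_delta w \<delta> x y)
        + \<phi>3 x / 6 * integral {c..e} (\<lambda>y. (y - x)^3 * w_delta w \<delta> x y)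
        + integral {c..e} (\<lambda>y. taylor_remainder x y * w_delta w \<delta> x y))"
proof -
  let ?W = "w_delta w \<delta> x"
  have moment: "(\<lambda>y. (y - x)^k * ?W y) integrable_on {c..e}" for k
    by (rule integrable_on_mult_w_delta[OF assms(1,2)]) (intro continuous_intros)
  have remainder: "(\<lambda>y. taylor_remainder x y * ?W y) integrable_on {c..e}"
    using assms by (intro integrable_on_mult_w_delta continuous_on_subset[OF continuous_on_taylor_remainder])
      auto
  have "((\<lambda>y. - (\<phi>1 x * ((y - x)^1 * ?W y) + \<phi>2 x / 2 * ((y - x)^2 * ?W y)
        + \<phi>3 x / 6 * ((y - x)^3 * ?W y) + taylor_remainder x y * ?W y)) has_integral
       - (\<phi>1 x * integral {c..e} (\<lambda>y. (y - x)^1 * ?W y)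
        + \<phi>2 x / 2 * integral {c..e} (\<lambda>y. (y - x)^2 * ?W y)
        + \<phi>3 x / 6 * integral {c..e} (\<lambda>y. (y - x)^3 * ?W y)
        + integral {c..e} (\<lambda>y. taylor_remainder x y * ?W y))) {c..e}"
    by (intro has_integral_neg has_integral_add has_integral_mult_right integrable_integral
        moment remainder)
  moreover have "(\<lambda>y. - (\<phi>1 x * ((y - x)^1 * ?W y) + \<phi>2 x / 2 * ((y - x)^2 * ?W y)
        + \<phi>3 x / 6 * ((y - x)^3 * ?W y) + taylor_remainder x y * ?W y)) = (\<lambda>y. (\<phi> x - \<phi> y) * ?W y)"
    unfolding taylor_remainder_def by (rule ext) (simp add: algebra_simps)
  ultimately show ?thesis
    by (simp add: integral_unique)
qed

lemma integral_taylor_remainder_bound: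
  assumes "A1 w" "0 < \<delta>" "0 \<le> c" "c \<le> e" "e \<le> 1" "x \<in> {0..1}"
  shows "\<bar>integral {c..e} (\<lambda>y. taylor_remainder x y * w_delta w \<delta> x y)\<bar> \<le> K4 * \<delta>^2 / 3"
proof -
  let ?W = "w_delta w \<delta> x"
  have pointwise: "\<bar>taylor_remainder x y * ?W y\<bar> \<le> K4 / 6 * \<delta>^2 * ((y - x)^2 * ?W y)"
    if "y \<in> {c..e}" for y
  proof (cases "\<delta> \<le> \<bar>x - y\<bar>")
    case True
    then show ?thesis
      using w_delta_eq_0[OF assms(1,2) True] by simp
  next
    case False
    then have "\<bar>y - x\<bar> \<le> \<bar>\<delta>\<bar>"
      by (simp add: abs_minus_commute)
    then have "(y - x)^2 \<le> \<delta>^2"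
      by (simp only: abs_le_square_iff)
    then have "(y - x)^2 * (y - x)^2 \<le> \<delta>^2 * (y - x)^2"
      by (rule mult_right_mono) simp
    then have "(y - x)^4 \<le> \<delta>^2 * (y - x)^2"
      by (simp add: power4_eq_xxxx power2_eq_square mult.assoc)
    then have "K4 * (y - x)^4 / 6 \<le> K4 / 6 * \<delta>^2 * (y - x)^2"
      using mult_left_mono[OF _ bounds_nonneg(3)] by (simp add: mult.assoc)
    with taylor_remainder_bound[OF assms(6), of y] that assms
    have "\<bar>taylor_remainder x y\<bar> \<le> K4 / 6 * \<delta>^2 * (y - x)^2"
      by auto
    then have "\<bar>taylor_remainder x y\<bar> * ?W y \<le> K4 / 6 * \<delta>^2 * (y - x)^2 * ?W y"
      using w_delta_nonneg[OF assms(1,2)] by (rule mult_right_mono)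
    then show ?thesis
      using w_delta_nonneg[OF assms(1,2), of x y] by (simp add: abs_mult mult.assoc)
  qed
  have "norm (integral {c..e} (\<lambda>y. taylor_remainder x y * ?W y))
      \<le> integral {c..e} (\<lambda>y. K4 / 6 * \<delta>^2 * ((y - x)^2 * ?W y))"
  proof (rule Henstock_Kurzweil_Integration.integral_norm_bound_integral)
    show "(\<lambda>y. taylor_remainder x y * ?W y) integrable_on {c..e}"
      using assms by (intro integrable_on_mult_w_delta continuous_on_subset[OF continuous_on_taylor_remainder])
        auto
    show "(\<lambda>y. K4 / 6 * \<delta>^2 * ((y - x)^2 * ?W y)) integrable_on {c..e}"
      by (intro integrable_on_mult_right integrable_on_mult_w_delta[OF assms(1,2)] continuous_intros)
  qed (use pointwise in simp)
  also have "\<dots> = K4 / 6 * \<delta>^2 * integral {c..e} (\<lambda>y. (y - x)^2 * ?W y)"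
    by simp
  also have "\<dots> \<le> K4 / 6 * \<delta>^2 * 2"
    using bounds_nonneg(3) by (intro mult_left_mono w_delta_second_moment_le[OF assms(1,2)]) auto
  finally show ?thesis
    by simp
qed

section \<open>Estimates of the truncation error\<close>

lemma interior_estimate:
  assumes "A1 w" "0 < \<delta>" "\<delta> \<le> x" "x \<le> 1 - \<delta>"
  shows "\<bar>N_tilde w \<delta> \<phi> x + \<phi>2 x\<bar> \<le> K4 * \<delta>^2 / 3"
proof -
  let ?W = "w_delta w \<delta> x"
  have "N_tilde w \<delta> \<phi> x = integral {0..1} (\<lambda>y. (\<phi> x - \<phi> y) * ?W y)"
    using N_tilde_eq[OF assms(1,2) continuous_on_phi] b_delta_interior[OF assms(3,4)] by simp
  also have "\<dots> = integral {x - \<delta>..x + \<delta>} (\<lambda>y. (\<phi> x - \<phi> y) * ?W y)"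
    using assms by (intro integral_subinterval_eq) (auto simp: w_delta_eq_0)
  also have "\<dots> = - (\<phi>2 x + integral {x - \<delta>..x + \<delta>} (\<lambda>y. taylor_remainder x y * ?W y))"
    using assms w_delta_odd_moment[of 1] w_delta_odd_moment[of 3]
      integral_unique[OF w_delta_second_moment[OF assms(1,2)]]
    by (subst integral_taylor_expansion) auto
  finally have "N_tilde w \<delta> \<phi> x + \<phi>2 x = - integral {x - \<delta>..x + \<delta>} (\<lambda>y. taylor_remainder x y * ?W y)"
    by simp
  then show ?thesis
    using assms integral_taylor_remainder_bound[OF assms(1,2), of "x - \<delta>" "x + \<delta>" x] by simp
qed

lemma boundary_integral_estimate:
  assumes "0 < x" "x < \<delta>" "\<delta> < 1/2"
  shows "\<bar>integral {0..x + \<delta>} \<phi> - \<phi>1 x * (x + \<delta>)^2 / 2\<bar> \<le> 4 * K2 * \<delta>^3"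
proof -
  define L where "L = x + \<delta>"
  have L: "0 \<le> L" "L \<le> 1" "L \<le> 2 * \<delta>"
    using assms unfolding L_def by auto
  have x: "x \<in> {0..1}"
    using assms by auto
  have pointwise: "norm (\<phi> y - \<phi>1 x * y) \<le> 2 * K2 * \<delta>^2" if y: "y \<in> {0..L}" for y
  proof -
    have "\<bar>y - x\<bar> \<le> \<bar>\<delta>\<bar>" "\<bar>0 - x\<bar> \<le> \<bar>\<delta>\<bar>"
      using y assms unfolding L_def by auto
    then have "K2 * (y - x)^2 \<le> K2 * \<delta>^2" "K2 * (0 - x)^2 \<le> K2 * \<delta>^2"
      using bounds_nonneg(1) by (simp_all only: abs_le_square_iff mult_left_mono)
    moreover have "\<bar>\<phi> y - (\<phi> x + \<phi>1 x * (y - x))\<bar> \<le> K2 * (y - x)^2"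
      using y L by (intro linear_taylor_bound x) auto
    moreover have "\<bar>\<phi> 0 - (\<phi> x + \<phi>1 x * (0 - x))\<bar> \<le> K2 * (0 - x)^2"
      by (intro linear_taylor_bound x) auto
    moreover have "\<phi> y - \<phi>1 x * y = (\<phi> y - (\<phi> x + \<phi>1 x * (y - x))) - (\<phi> 0 - (\<phi> x + \<phi>1 x * (0 - x)))"
      using vanishes_0 by (simp add: algebra_simps)
    ultimately show ?thesis
      unfolding real_norm_def by linarith
  qed
  have linear_part: "((\<lambda>y. \<phi> y - \<phi>1 x * y) has_integral integral {0..L} \<phi> - \<phi>1 x * (L^2 / 2)) {0..L}"
    using ident_has_integral[OF L(1)] L
    by (intro has_integral_diff integrable_integral has_integral_mult_right integrable_continuous_interval
        continuous_on_subset[OF continuous_on_phi]) auto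
  have "norm (integral {0..L} \<phi> - \<phi>1 x * (L^2 / 2)) \<le> L * (2 * K2 * \<delta>^2)"
  proof -
    note bound = has_integral_bound_real[where S = "{}", OF _ _ linear_part]
    have "0 \<le> 2 * K2 * \<delta>^2"
      using bounds_nonneg(1) by simp
    from bound[OF this] pointwise L(1) show ?thesis
      by (simp add: mult.commute)
  qed
  also have "\<dots> \<le> (2 * \<delta>) * (2 * K2 * \<delta>^2)"
    using L bounds_nonneg(1) by (intro mult_right_mono) auto
  finally show ?thesis
    unfolding L_def by (simp add: power2_eq_square power3_eq_cube mult_ac)
qed

text \<open>The moments of w_delta over [0, x + delta] are the full moments minus the tail moments
  over [x - delta, 0]; the first tail moment is exactly absorbed by the correction term.\<close>

lemma left_boundary_identity:
  assumes "A1 w" "0 < \<delta>" "\<delta> < 1/2" "0 < x" "x < \<delta>"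
  shows "N_tilde w \<delta> \<phi> x + \<phi>2 x =
      b_delta w \<delta> x * (integral {0..x + \<delta>} \<phi> - \<phi>1 x * (x + \<delta>)^2 / 2)
      + \<phi>2 x / 2 * tail_moment w \<delta> x 2 - \<phi>3 x / 6 * tail_moment w \<delta> x 3
      - integral {0..x + \<delta>} (\<lambda>y. taylor_remainder x y * w_delta w \<delta> x y)"
proof -
  define L where "L = x + \<delta>"
  let ?W = "w_delta w \<delta> x"
  define I where "I k = integral {0..L} (\<lambda>y. (y - x)^k * ?W y)" for k :: nat
  have window: "{0..1} \<inter> {x - \<delta>..x + \<delta>} = {0..L}"
    using assms unfolding L_def by auto
  have "N_tilde w \<delta> \<phi> x = integral {0..1} (\<lambda>y. (\<phi> x - \<phi> y) * ?W y) + b_delta w \<delta> x * integral {0..L} \<phi>"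
    using N_tilde_eq[OF assms(1,2) continuous_on_phi, of x] unfolding window .
  also have "integral {0..1} (\<lambda>y. (\<phi> x - \<phi> y) * ?W y) = integral {0..L} (\<lambda>y. (\<phi> x - \<phi> y) * ?W y)"
    using assms unfolding L_def by (intro integral_subinterval_eq) (auto simp: w_delta_eq_0)
  also have "\<dots> = - (\<phi>1 x * I 1 + \<phi>2 x / 2 * I 2 + \<phi>3 x / 6 * I 3
      + integral {0..L} (\<lambda>y. taylor_remainder x y * ?W y))"
    unfolding I_def using assms unfolding L_def by (intro integral_taylor_expansion) auto
  finally have N: "N_tilde w \<delta> \<phi> x = - (\<phi>1 x * I 1 + \<phi>2 x / 2 * I 2 + \<phi>3 x / 6 * I 3
      + integral {0..L} (\<lambda>y. taylor_remainder x y * ?W y)) + b_delta w \<delta> x * integral {0..L} \<phi>" .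
  have split: "I k = integral {x - \<delta>..x + \<delta>} (\<lambda>y. (y - x)^k * ?W y) - (-1)^k * tail_moment w \<delta> x k"
    for k
  proof -
    have "integral {x - \<delta>..0} (\<lambda>y. (y - x)^k * ?W y) + I k = integral {x - \<delta>..x + \<delta>} (\<lambda>y. (y - x)^k * ?W y)"
      unfolding I_def L_def using assms
      by (intro Henstock_Kurzweil_Integration.integral_combine integrable_on_mult_w_delta continuous_intros)
        auto
    moreover have "integral {x - \<delta>..0} (\<lambda>y. (y - x)^k * ?W y) = (-1)^k * tail_moment w \<delta> x k"
    proof -
      have "(\<lambda>y. (y - x)^k * ?W y) = (\<lambda>y. (-1)^k * ((x - y)^k * ?W y))"
        by (rule ext) (metis minus_diff_eq mult.assoc power_minus)
      then show ?thesis
        unfolding tail_moment_def by simp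
    qed
    ultimately show ?thesis
      by linarith
  qed
  have I: "I 1 = tail_moment w \<delta> x 1" "I 2 = 2 - tail_moment w \<delta> x 2" "I 3 = tail_moment w \<delta> x 3"
    using split[of 1] split[of 2] split[of 3] w_delta_odd_moment[of 1] w_delta_odd_moment[of 3]
      integral_unique[OF w_delta_second_moment[OF assms(1,2)]]
    by simp_all
  show ?thesis
    unfolding N I tail_moment_1_eq[OF assms(4,5)] L_def by (simp add: algebra_simps)
qed

lemma left_boundary_estimate:
  assumes "A1 w" "0 < \<delta>" "\<delta> < 1/2" "0 < x" "x < \<delta>"
  shows "\<bar>N_tilde w \<delta> \<phi> x + \<phi>2 x\<bar> \<le> (5 * K2 + K3) * \<delta>^3 * b_delta w \<delta> x + K4 * \<delta>^2 / 3"
proof -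
  let ?b = "b_delta w \<delta> x" and ?T = "tail_moment w \<delta> x"
  have x: "x \<in> {0..1}" "0 \<le> x"
    using assms by auto
  have b: "0 \<le> ?b"
    using b_delta_nonneg_and_bounded[OF assms(1-3)] by simp
  have T1: "?T 1 \<le> 2 * \<delta>^2 * ?b"
  proof -
    have "(x + \<delta>)^2 \<le> (2 * \<delta>)^2"
      using assms by (intro power_mono) auto
    then have "?b * (x + \<delta>)^2 \<le> ?b * (2 * \<delta>)^2"
      using b by (rule mult_left_mono)
    then show ?thesis
      using tail_moment_1_eq[OF assms(4,5), of w] by (simp add: power2_eq_square mult_ac)
  qed
  have T2: "\<bar>?T 2\<bar> \<le> 2 * \<delta>^3 * ?b"
  proof -
    have "?T 2 \<le> \<delta> * ?T 1"
      using tail_moment_Suc_le[OF assms(1,2) x(2), of 1] by (simp add: numeral_2_eq_2)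
    also have "\<dots> \<le> \<delta> * (2 * \<delta>^2 * ?b)"
      using T1 assms(2) by (intro mult_left_mono) auto
    finally show ?thesis
      using tail_moment_nonneg[OF assms(1,2) x(2), of 2] by (simp add: power3_eq_cube power2_eq_square mult_ac)
  qed
  have T3: "\<bar>?T 3\<bar> \<le> \<delta>^3 * ?b"
  proof -
    have "?T 3 \<le> \<delta>^2 * (2 * \<delta>^2 * ?b)"
      using tail_moment_Suc_le[OF assms(1,2) x(2), of 2] mult_left_mono[OF T1, of "\<delta>^2"]
      by (simp add: numeral_eq_Suc)
    also have "\<dots> = (2 * \<delta>) * (\<delta>^3 * ?b)"
      by (simp add: power3_eq_cube power2_eq_square mult_ac)
    also have "\<dots> \<le> 1 * (\<delta>^3 * ?b)"
      using assms b by (intro mult_right_mono) auto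
    finally show ?thesis
      using tail_moment_nonneg[OF assms(1,2) x(2), of 3] by simp
  qed
  have "\<bar>?b * (integral {0..x + \<delta>} \<phi> - \<phi>1 x * (x + \<delta>)^2 / 2)\<bar> \<le> ?b * (4 * K2 * \<delta>^3)"
    unfolding abs_mult using b boundary_integral_estimate[OF assms(4,5,3)] by (simp add: mult_left_mono)
  moreover have "\<bar>\<phi>2 x / 2 * ?T 2\<bar> \<le> K2 / 2 * (2 * \<delta>^3 * ?b)"
    unfolding abs_mult using bound2[OF x(1)] T2 by (intro mult_mono) auto
  moreover have "\<bar>\<phi>3 x / 6 * ?T 3\<bar> \<le> K3 / 6 * (\<delta>^3 * ?b)"
    unfolding abs_mult using bound3[OF x(1)] T3 by (intro mult_mono) auto
  moreover have "\<bar>integral {0..x + \<delta>} (\<lambda>y. taylor_remainder x y * w_delta w \<delta> x y)\<bar> \<le> K4 * \<delta>^2 / 3"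
    using assms x by (intro integral_taylor_remainder_bound) auto
  moreover have "0 \<le> K3 * (\<delta>^3 * ?b)"
    using bounds_nonneg(2) assms(2) b by simp
  ultimately have "\<bar>?b * (integral {0..x + \<delta>} \<phi> - \<phi>1 x * (x + \<delta>)^2 / 2)\<bar> + \<bar>\<phi>2 x / 2 * ?T 2\<bar>
      + \<bar>\<phi>3 x / 6 * ?T 3\<bar> + \<bar>integral {0..x + \<delta>} (\<lambda>y. taylor_remainder x y * w_delta w \<delta> x y)\<bar>
      \<le> (5 * K2 + K3) * \<delta>^3 * ?b + K4 * \<delta>^2 / 3"
    by (simp add: algebra_simps)
  then show ?thesis
    unfolding left_boundary_identity[OF assms] by linarith
qed

lemma reflected: "C4_test_function (\<lambda>y. \<phi> (1 - y)) (\<lambda>y. - \<phi>1 (1 - y)) (\<lambda>y. \<phi>2 (1 - y))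
    (\<lambda>y. - \<phi>3 (1 - y)) (\<lambda>y. \<phi>4 (1 - y)) K2 K3 K4"
proof
  fix x :: real assume x: "x \<in> {0..1}"
  show "((\<lambda>y. \<phi> (1 - y)) has_real_derivative - \<phi>1 (1 - x)) (at x within {0..1})"
    by (rule has_real_derivative_reflect[OF deriv1 x])
  show "((\<lambda>y. - \<phi>1 (1 - y)) has_real_derivative \<phi>2 (1 - x)) (at x within {0..1})"
    using DERIV_minus[OF has_real_derivative_reflect[OF deriv2 x]] by simp
  show "((\<lambda>y. \<phi>2 (1 - y)) has_real_derivative - \<phi>3 (1 - x)) (at x within {0..1})"
    by (rule has_real_derivative_reflect[OF deriv3 x])
  show "((\<lambda>y. - \<phi>3 (1 - y)) has_real_derivative \<phi>4 (1 - x)) (at x within {0..1})"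
    using DERIV_minus[OF has_real_derivative_reflect[OF deriv4 x]] by simp
  have "1 - x \<in> {0..1}"
    using x by auto
  then show "\<bar>\<phi>2 (1 - x)\<bar> \<le> K2" "\<bar>- \<phi>3 (1 - x)\<bar> \<le> K3" "\<bar>\<phi>4 (1 - x)\<bar> \<le> K4"
    using bound2 bound3 bound4 by auto
qed (simp_all add: vanishes_0 vanishes_1)

lemma right_boundary_estimate:
  assumes "A1 w" "0 < \<delta>" "\<delta> < 1/2" "1 - \<delta> < x" "x < 1"
  shows "\<bar>N_tilde w \<delta> \<phi> x + \<phi>2 x\<bar> \<le> (5 * K2 + K3) * \<delta>^3 * b_delta w \<delta> x + K4 * \<delta>^2 / 3"
proof -
  have b: "b_delta w \<delta> x = b_delta w \<delta> (1 - x)"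
    using assms(3-5) by (rule b_delta_reflect)
  have "0 < 1 - x" "1 - x < \<delta>"
    using assms by auto
  from C4_test_function.left_boundary_estimate[OF reflected assms(1-3) this]
  show ?thesis
    unfolding N_tilde_reflect[OF b] b by simp
qed

lemma truncation_error_estimate:
  assumes "A1 w" "0 < \<delta>" "\<delta> < 1/2" "0 < x" "x < 1"
  shows "\<bar>N_tilde w \<delta> \<phi> x + \<phi>2 x\<bar> \<le> (5 * K2 + K3) * \<delta>^3 * b_delta w \<delta> x + K4 * \<delta>^2 / 3"
proof -
  have "0 \<le> (5 * K2 + K3) * \<delta>^3 * b_delta w \<delta> x"
    using bounds_nonneg b_delta_nonneg_and_bounded[OF assms(1-3)] assms(2) by simp
  consider "x < \<delta>" | "1 - \<delta> < x" | "\<delta> \<le> x" "x \<le> 1 - \<delta>"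
    by linarith
  then show ?thesis
  proof cases
    case 1
    then show ?thesis
      using left_boundary_estimate assms by simp
  next
    case 2
    then show ?thesis
      using right_boundary_estimate assms by simp
  next
    case 3
    then show ?thesis
      using interior_estimate[OF assms(1,2) 3] \<open>0 \<le> (5 * K2 + K3) * \<delta>^3 * b_delta w \<delta> x\<close> by simp
  qed
qed

lemma truncation_error_bound:
  assumes "A1 w"
  obtains M M' where "0 < M" "0 < M'"
    "\<And>\<delta> x. 0 < \<delta> \<Longrightarrow> \<delta> < 1/2 \<Longrightarrow> 0 < x \<Longrightarrow> x < 1 \<Longrightarrow>
      \<bar>N_tilde w \<delta> \<phi> x + \<phi>2 x\<bar> \<le> M * \<delta>^3 * b_delta w \<delta> x + M' * \<delta>^2"
proof
  show "0 < 5 * K2 + K3 + 1" "0 < K4 / 3 + 1"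
    using bounds_nonneg by auto
  fix \<delta> x :: real
  assume "0 < \<delta>" "\<delta> < 1/2" "0 < x" "x < 1"
  then have "\<bar>N_tilde w \<delta> \<phi> x + \<phi>2 x\<bar> \<le> (5 * K2 + K3) * \<delta>^3 * b_delta w \<delta> x + K4 * \<delta>^2 / 3"
    and "0 \<le> \<delta>^3 * b_delta w \<delta> x"
    using truncation_error_estimate[OF assms] b_delta_nonneg_and_bounded[OF assms] by simp_all
  moreover have "(5 * K2 + K3 + 1) * \<delta>^3 * b_delta w \<delta> x + (K4 / 3 + 1) * \<delta>^2
      = (5 * K2 + K3) * \<delta>^3 * b_delta w \<delta> x + K4 * \<delta>^2 / 3 + \<delta>^3 * b_delta w \<delta> x + \<delta>^2"
    by (simp add: algebra_simps)
  ultimately show "\<bar>N_tilde w \<delta> \<phi> x + \<phi>2 x\<bar>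
      \<le> (5 * K2 + K3 + 1) * \<delta>^3 * b_delta w \<delta> x + (K4 / 3 + 1) * \<delta>^2"
    using zero_le_power2[of \<delta>] by linarith
qed

end

lemma truncation_error_asymptotics:
  fixes T :: "real \<Rightarrow> real \<Rightarrow> real"
  assumes "A1 w" "0 \<le> M"
    and bound: "\<And>\<delta> x. 0 < \<delta> \<Longrightarrow> \<delta> < 1/2 \<Longrightarrow> 0 < x \<Longrightarrow> x < 1 \<Longrightarrow>
      \<bar>T \<delta> x\<bar> \<le> M * \<delta>^3 * b_delta w \<delta> x + M' * \<delta>^2"
  shows "\<exists>C. \<forall>\<^sub>F \<delta> in at_right 0. \<forall>x. \<delta> < x \<and> x < 1 - \<delta> \<longrightarrow> \<bar>T \<delta> x\<bar> \<le> C * \<delta>^2"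
    and "\<exists>C. \<forall>\<^sub>F \<delta> in at_right 0. \<forall>x. 0 < x \<and> x < 1 \<longrightarrow> \<bar>T \<delta> x\<bar> \<le> C"
proof -
  have small: "\<forall>\<^sub>F \<delta> in at_right 0. 0 < \<delta> \<and> \<delta> < (1/2::real)"
    by (rule eventually_at_rightI[of 0 "1/2"]) auto
  show "\<exists>C. \<forall>\<^sub>F \<delta> in at_right 0. \<forall>x. \<delta> < x \<and> x < 1 - \<delta> \<longrightarrow> \<bar>T \<delta> x\<bar> \<le> C * \<delta>^2"
  proof (intro exI eventually_mono[OF small] allI impI)
    fix \<delta> x :: real
    assume "0 < \<delta> \<and> \<delta> < 1/2" "\<delta> < x \<and> x < 1 - \<delta>"
    then show "\<bar>T \<delta> x\<bar> \<le> M' * \<delta>^2"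
      using bound[of \<delta> x] b_delta_interior[of \<delta> x w] by simp
  qed
  show "\<exists>C. \<forall>\<^sub>F \<delta> in at_right 0. \<forall>x. 0 < x \<and> x < 1 \<longrightarrow> \<bar>T \<delta> x\<bar> \<le> C"
  proof (intro exI eventually_mono[OF small] allI impI)
    fix \<delta> x :: real
    assume \<delta>: "0 < \<delta> \<and> \<delta> < 1/2" and x: "0 < x \<and> x < 1"
    have "M * \<delta>^3 * b_delta w \<delta> x \<le> M * (2 * w 0)"
      unfolding mult.assoc
      using b_delta_nonneg_and_bounded[OF assms(1)] \<delta> assms(2) by (intro mult_left_mono) auto
    moreover have "M' * \<delta>^2 \<le> \<bar>M'\<bar> * \<delta>^2"
      by (simp add: mult_right_mono)
    moreover have "\<bar>M'\<bar> * \<delta>^2 \<le> \<bar>M'\<bar> * 1"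
      using \<delta> by (intro mult_left_mono power_le_one) auto
    ultimately show "\<bar>T \<delta> x\<bar> \<le> M * (2 * w 0) + \<bar>M'\<bar> * 1"
      using bound[of \<delta> x] \<delta> x by linarith
  qed
qed

theorem mainTheorem8:
  fixes w \<phi> \<phi>1 \<phi>2 \<phi>3 \<phi>4 :: "real \<Rightarrow> real"
  assumes hw: "A1 w"
    and d1: "\<And>x. x \<in> {0..1} \<Longrightarrow> (\<phi> has_real_derivative \<phi>1 x) (at x within {0..1})"
    and d2: "\<And>x. x \<in> {0..1} \<Longrightarrow> (\<phi>1 has_real_derivative \<phi>2 x) (at x within {0..1})"
    and d3: "\<And>x. x \<in> {0..1} \<Longrightarrow> (\<phi>2 has_real_derivative \<phi>3 x) (at x within {0..1})"
    and d4: "\<And>x. x \<in> {0..1} \<Longrightarrow> (\<phi>3 has_real_derivative \<phi>4 x) (at x within {0..1})"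
    and c4: "continuous_on {0..1} \<phi>4"
    and bc: "\<phi> 0 = 0" "\<phi> 1 = 0"
  defines "T \<equiv> (\<lambda>\<delta> x. N_tilde w \<delta> \<phi> x - (- \<phi>2 x))"
  shows "(\<exists>M M'. M > 0 \<and> M' > 0 \<and>
            (\<forall>\<delta>. 0 < \<delta> \<and> \<delta> < 1/2 \<longrightarrow>
               (\<forall>x. 0 < x \<and> x < 1 \<longrightarrow>
                  \<bar>T \<delta> x\<bar> \<le> M * \<delta>^3 * b_delta w \<delta> x + M' * \<delta>^2)))
       \<and> (\<exists>C. \<forall>\<^sub>F \<delta> in at_right 0.
               \<forall>x. \<delta> < x \<and> x < 1 - \<delta> \<longrightarrow> \<bar>T \<delta> x\<bar> \<le> C * \<delta>^2)
       \<and> (\<exists>C. \<forall>\<^sub>F \<delta> in at_right 0.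
               \<forall>x. 0 < x \<and> x < 1 \<longrightarrow> \<bar>T \<delta> x\<bar> \<le> C)"
proof -
  have "continuous_on {0..1} \<phi>2" "continuous_on {0..1} \<phi>3"
    using d3 d4 DERIV_continuous continuous_on_eq_continuous_within by blast+
  then obtain K2 K3 K4 where "\<And>y. y \<in> {0..1} \<Longrightarrow> \<bar>\<phi>2 y\<bar> \<le> K2"
    "\<And>y. y \<in> {0..1} \<Longrightarrow> \<bar>\<phi>3 y\<bar> \<le> K3" "\<And>y. y \<in> {0..1} \<Longrightarrow> \<bar>\<phi>4 y\<bar> \<le> K4"
    using continuous_on_compact_bound[OF compact_Icc] c4 by (metis real_norm_def)
  then interpret C4_test_function \<phi> \<phi>1 \<phi>2 \<phi>3 \<phi>4 K2 K3 K4
    using d1 d2 d3 d4 bc by unfold_locales auto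
  obtain M M' where "0 < M" "0 < M'" and bound:
    "\<And>\<delta> x. 0 < \<delta> \<Longrightarrow> \<delta> < 1/2 \<Longrightarrow> 0 < x \<Longrightarrow> x < 1 \<Longrightarrow>
      \<bar>T \<delta> x\<bar> \<le> M * \<delta>^3 * b_delta w \<delta> x + M' * \<delta>^2"
    using truncation_error_bound[OF hw] unfolding T_def by auto
  then show ?thesis
    using truncation_error_asymptotics[OF hw _ bound] by auto
qed

end
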